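(* For every $n\ge 1$, $\gamma_{\rm i}(P_n)=\lceil n/2\rceil$, where $P_n$ is the path on $n$ vertices.
   Context: Indicated domination game on a graph $G$: two players, Dominator and Staller, alternate. In each round Dominator indicates a vertex $v$ not yet dominated by the vertices previously selected by Staller (a vertex dominates itself and its neighbors), and Staller must select a vertex of the closed neighborhood $N[v]$, adding it to a set $D$. The game ends when $D$ is a dominating set of $G$. Dominator wants to minimize $|D|$ and Staller to maximize it; the size of $D$ under optimal play of both is the indicated domination number $\gamma_{\rm i}(G)$. *)

theory Defs
  imports Complex_Main
begin

text \<open>A graph is given by a finite vertex set V and a symmetric irreflexive
  adjacency relation E (only its restriction to V matters).\<close>

definition closed_nbhd :: "'a set \<Rightarrow> ('a \<Rightarrow> 'a \<Rightarrow> bool) \<Rightarrow> 'a \<Rightarrow> 'a set" where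
  "closed_nbhd V E v = {v} \<union> {u \<in> V. E v u}"

definition dominated_by :: "'a set \<Rightarrow> ('a \<Rightarrow> 'a \<Rightarrow> bool) \<Rightarrow> 'a set \<Rightarrow> 'a set" where
  "dominated_by V E D = (\<Union>u\<in>D. closed_nbhd V E u)"

definition is_dominating :: "'a set \<Rightarrow> ('a \<Rightarrow> 'a \<Rightarrow> bool) \<Rightarrow> 'a set \<Rightarrow> bool" where
  "is_dominating V E D \<longleftrightarrow> D \<subseteq> V \<and> V \<subseteq> dominated_by V E D"

text \<open>In each round Dominator indicates an undominated vertex v and
  Staller picks some vertex of N[v].\<close>

primrec dom_wins_within :: "'a set \<Rightarrow> ('a \<Rightarrow> 'a \<Rightarrow> bool) \<Rightarrow> nat \<Rightarrow> 'a set \<Rightarrow> bool" where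
  "dom_wins_within V E 0 D = is_dominating V E D"
| "dom_wins_within V E (Suc k) D =
     (is_dominating V E D \<or>
      (\<exists>v \<in> V - dominated_by V E D.
         \<forall>u \<in> closed_nbhd V E v. dom_wins_within V E k (insert u D)))"

text \<open>Every selected vertex is new (it dominates the indicated, previously
  undominated vertex), so the number of moves equals |D|.\<close>

definition indicated_domination_number :: "'a set \<Rightarrow> ('a \<Rightarrow> 'a \<Rightarrow> bool) \<Rightarrow> nat" where
  "indicated_domination_number V E = (LEAST k. dom_wins_within V E k {})"

definition path_adj :: "nat \<Rightarrow> nat \<Rightarrow> bool" where
  "path_adj i j \<longleftrightarrow> i + 1 = j \<or> j + 1 = i"

end

theory Submission
  imports Defs
begin

(* Lower bound: Staller answers every indicated vertex v with an even vertex u of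
   N[v] (v itself or v - 1). No other even vertex lies in N[u], so each move
   dominates at most one of the ceil(n/2) even vertices.
   Upper bound: Dominator keeps every vertex below some m dominated except for a
   set H of holes, with (n - m)/2 + |H| at most the number of moves left. He
   indicates an undominated hole if there is one; otherwise, with v the least
   undominated vertex, he indicates v + 1 if it is undominated and v otherwise.
   Every answer dominates all vertices below v + 2, except the answer v + 2 to the
   indication of v + 1, which dominates all vertices below v + 4 but the new hole v. *)

lemma dom_wins_within_if_dominating: "is_dominating V E D \<Longrightarrow> dom_wins_within V E k D"
  by (cases k) auto

lemma dom_wins_within_SucI:
  assumes "v \<in> V - dominated_by V E D"
    and "\<And>u. u \<in> closed_nbhd V E v \<Longrightarrow> dom_wins_within V E k (insert u D)"
  shows "dom_wins_within V E (Suc k) D"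
  using assms by auto

lemma dominated_by_mono: "D \<subseteq> D' \<Longrightarrow> dominated_by V E D \<subseteq> dominated_by V E D'"
  by (auto simp: dominated_by_def)

lemma closed_nbhd_subset: "v \<in> V \<Longrightarrow> closed_nbhd V E v \<subseteq> V"
  by (auto simp: closed_nbhd_def)

lemma dominated_by_insert:
  "dominated_by V E (insert u D) = closed_nbhd V E u \<union> dominated_by V E D"
  by (simp add: dominated_by_def)

lemma not_dom_wins_within_if_isolating:
  assumes "finite S" and "S \<subseteq> V - dominated_by V E D" and "k < card S"
    and "\<And>v. v \<in> V \<Longrightarrow> \<exists>u \<in> closed_nbhd V E v. card (S \<inter> closed_nbhd V E u) \<le> 1"
  shows "\<not> dom_wins_within V E k D"
  using assms
proof (induction k arbitrary: S D)
  case 0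
  then obtain s where "s \<in> S" by fastforce
  with 0 show ?case by (auto simp: is_dominating_def)
next
  case (Suc k)
  then obtain s where "s \<in> S" by fastforce
  with Suc.prems(2) have "\<not> is_dominating V E D"
    by (auto simp: is_dominating_def)
  moreover have "\<exists>u \<in> closed_nbhd V E v. \<not> dom_wins_within V E k (insert u D)"
    if "v \<in> V" for v
  proof -
    obtain u where u: "u \<in> closed_nbhd V E v" and few: "card (S \<inter> closed_nbhd V E u) \<le> 1"
      using Suc.prems(4) \<open>v \<in> V\<close> by blast
    let ?S' = "S - closed_nbhd V E u"
    have "card ?S' = card S - card (S \<inter> closed_nbhd V E u)"
      using Suc.prems(1) by (metis card_Diff_subset_Int finite_Int)
    then have "k < card ?S'"
      using few Suc.prems(3) by linarith
    moreover have "?S' \<subseteq> V - dominated_by V E (insert u D)"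
      using Suc.prems(2) by (auto simp: dominated_by_insert)
    moreover have "card (?S' \<inter> closed_nbhd V E w) \<le> card (S \<inter> closed_nbhd V E w)" for w
      using Suc.prems(1) by (intro card_mono) auto
    ultimately have "\<not> dom_wins_within V E k (insert u D)"
      using Suc.IH[of ?S'] Suc.prems(1,4) by (meson finite_Diff order_trans)
    with u show ?thesis by blast
  qed
  ultimately show ?case by auto
qed

lemma mem_closed_nbhd_path:
  "w \<in> closed_nbhd {0..<n} path_adj v \<longleftrightarrow> w = v \<or> w < n \<and> (w = v + 1 \<or> w + 1 = v)"
  by (auto simp: closed_nbhd_def path_adj_def)

lemma path_even_vertices_isolating:
  assumes "v < n"
  shows "\<exists>u \<in> closed_nbhd {0..<n} path_adj v.
           card ({i. i < n \<and> even i} \<inter> closed_nbhd {0..<n} path_adj u) \<le> 1"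
proof
  define u where "u = (if even v then v else v - 1)"
  show "u \<in> closed_nbhd {0..<n} path_adj v"
    using assms by (auto simp: u_def mem_closed_nbhd_path elim: oddE)
  have "{i. i < n \<and> even i} \<inter> closed_nbhd {0..<n} path_adj u \<subseteq> {u}"
    by (auto simp: u_def mem_closed_nbhd_path; presburger)
  then show "card ({i. i < n \<and> even i} \<inter> closed_nbhd {0..<n} path_adj u) \<le> 1"
    using card_mono[of "{u}"] by fastforce
qed

lemma card_even_less: "card {i. i < n \<and> even (i::nat)} = (n + 1) div 2"
proof -
  have "{i. i < n \<and> even i} = (\<lambda>j. 2 * j) ` {..<(n + 1) div 2}"
    by (auto elim!: evenE)
  then show ?thesis
    by (simp add: card_image inj_on_def)
qed

definition dominated_below_except :: "nat \<Rightarrow> nat \<Rightarrow> nat set \<Rightarrow> nat set \<Rightarrow> bool" where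
  "dominated_below_except n m H D \<longleftrightarrow>
     (\<forall>i < n. i < m \<longrightarrow> i \<notin> H \<longrightarrow> i \<in> dominated_by {0..<n} path_adj D)"

lemma dominated_below_except_extend:
  assumes "dominated_below_except n m H D" and "D \<subseteq> D'"
    and "\<And>i. i \<in> H - H' \<Longrightarrow> i < m \<Longrightarrow> i < n \<Longrightarrow> i \<in> dominated_by {0..<n} path_adj D'"
    and "\<And>i. m \<le> i \<Longrightarrow> i < m' \<Longrightarrow> i < n \<Longrightarrow> i \<notin> H' \<Longrightarrow> i \<in> dominated_by {0..<n} path_adj D'"
  shows "dominated_below_except n m' H' D'"
  unfolding dominated_below_except_def
proof (intro allI impI)
  fix i
  assume i: "i < n" "i < m'" "i \<notin> H'"
  show "i \<in> dominated_by {0..<n} path_adj D'"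
  proof (cases "i < m")
    case True
    have "dominated_by {0..<n} path_adj D \<subseteq> dominated_by {0..<n} path_adj D'"
      using assms(2) by (rule dominated_by_mono)
    with True show ?thesis
      using assms(1,3) i unfolding dominated_below_except_def by (cases "i \<in> H") auto
  next
    case False
    then show ?thesis
      using assms(4) i by simp
  qed
qed

lemma path_least_undominated:
  assumes "\<not> is_dominating {0..<n} path_adj D" and "D \<subseteq> {0..<n}"
  obtains v where "v \<in> {0..<n} - dominated_by {0..<n} path_adj D"
    and "dominated_below_except n v {} D"
proof -
  let ?undominated = "\<lambda>v. v < n \<and> v \<notin> dominated_by {0..<n} path_adj D"
  have "\<exists>v. ?undominated v"
    using assms by (auto simp: is_dominating_def)
  then obtain v where v: "?undominated v" and least: "\<And>i. i < v \<Longrightarrow> \<not> ?undominated i"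
    using exists_least_iff[of ?undominated] by blast
  show ?thesis
    by (rule that) (use v least in \<open>auto simp: dominated_below_except_def\<close>)
qed

lemma path_hole_response:
  assumes "finite H" and "dominated_below_except n m H D" and "h \<in> H"
    and u: "u \<in> closed_nbhd {0..<n} path_adj h"
    and budget: "n - m + 2 * card H \<le> 2 * Suc k"
  shows "\<exists>m H. finite H \<and> dominated_below_except n m H (insert u D) \<and> n - m + 2 * card H \<le> 2 * k"
proof (intro exI conjI)
  show "finite (H - {h})"
    using assms(1) by simp
  show "dominated_below_except n m (H - {h}) (insert u D)"
    by (rule dominated_below_except_extend[OF assms(2)])
      (use u in \<open>auto simp: dominated_by_insert mem_closed_nbhd_path\<close>)
  have "0 < card H"
    using assms(1,3) by (auto simp: card_gt_0_iff)
  then show "n - m + 2 * card (H - {h}) \<le> 2 * k"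
    using budget assms(3) by (simp add: card_Diff_singleton)
qed

lemma path_advance_response:
  assumes below: "dominated_below_except n v {} D" and "v < n"
    and w: "w = (if v + 1 < n \<and> v + 1 \<notin> dominated_by {0..<n} path_adj D then v + 1 else v)"
    and u: "u \<in> closed_nbhd {0..<n} path_adj w"
    and budget: "n - v \<le> 2 * Suc k"
  shows "\<exists>m H. finite H \<and> dominated_below_except n m H (insert u D) \<and> n - m + 2 * card H \<le> 2 * k"
proof (cases "w = v + 1 \<and> u = v + 2")
  case True
  then have "v + 2 < n"
    using u by (simp add: mem_closed_nbhd_path)
  have "dominated_below_except n (v + 4) {v} (insert u D)"
    using below by (rule dominated_below_except_extend)
      (use True in \<open>auto simp: dominated_by_insert mem_closed_nbhd_path\<close>)
  moreover have "n - (v + 4) + 2 * card {v} \<le> 2 * k"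
    using budget \<open>v + 2 < n\<close> by (simp; presburger)
  ultimately show ?thesis
    by blast
next
  case False
  have "v \<in> dominated_by {0..<n} path_adj (insert u D)"
    using u w False \<open>v < n\<close> by (auto simp: dominated_by_insert mem_closed_nbhd_path split: if_splits)
  moreover have "v + 1 \<in> dominated_by {0..<n} path_adj (insert u D)" if "v + 1 < n"
    using u w that by (auto simp: dominated_by_insert mem_closed_nbhd_path split: if_splits)
  ultimately have "dominated_below_except n (v + 2) {} (insert u D)"
    by (intro dominated_below_except_extend[OF below]) (auto simp: less_Suc_eq)
  moreover have "n - (v + 2) + 2 * card {} \<le> 2 * k"
    using budget by simp
  ultimately show ?thesis
    by blast
qed

lemma path_dominator_move:
  assumes "D \<subseteq> {0..<n}" and "finite H" and "dominated_below_except n m H D"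
    and "n - m + 2 * card H \<le> 2 * Suc k" and "\<not> is_dominating {0..<n} path_adj D"
  obtains w where "w \<in> {0..<n} - dominated_by {0..<n} path_adj D"
    and "\<And>u. u \<in> closed_nbhd {0..<n} path_adj w \<Longrightarrow>
           \<exists>m H. finite H \<and> dominated_below_except n m H (insert u D) \<and> n - m + 2 * card H \<le> 2 * k"
proof (cases "\<exists>h \<in> H. h \<in> {0..<n} - dominated_by {0..<n} path_adj D")
  case True
  then obtain h where h: "h \<in> H" "h \<in> {0..<n} - dominated_by {0..<n} path_adj D" ..
  show ?thesis
    using path_hole_response[OF assms(2,3) h(1) _ assms(4)] by (rule that[OF h(2)])
next
  case False
  obtain v where v: "v \<in> {0..<n} - dominated_by {0..<n} path_adj D"
    and below: "dominated_below_except n v {} D"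
    using path_least_undominated[OF assms(5,1)] .
  have "m \<le> v"
  proof (rule ccontr)
    assume "\<not> m \<le> v"
    then have "v \<in> H"
      using v assms(3) by (auto simp: dominated_below_except_def)
    with v False show False
      by blast
  qed
  then have budget: "n - v \<le> 2 * Suc k"
    using assms(4) by linarith
  define w where "w = (if v + 1 < n \<and> v + 1 \<notin> dominated_by {0..<n} path_adj D then v + 1 else v)"
  show ?thesis
  proof (rule that)
    show "w \<in> {0..<n} - dominated_by {0..<n} path_adj D"
      using v by (simp add: w_def)
    have "v < n"
      using v by simp
    then show "\<exists>m H. finite H \<and> dominated_below_except n m H (insert u D) \<and> n - m + 2 * card H \<le> 2 * k"
      if "u \<in> closed_nbhd {0..<n} path_adj w" for u
      by (rule path_advance_response[OF below _ w_def that budget])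
  qed
qed

lemma dom_wins_within_path:
  assumes "D \<subseteq> {0..<n}" and "finite H" and "dominated_below_except n m H D"
    and "n - m + 2 * card H \<le> 2 * k"
  shows "dom_wins_within {0..<n} path_adj k D"
  using assms
proof (induction k arbitrary: m H D)
  case 0
  then have "H = {}" and "n \<le> m"
    by auto
  with 0 show ?case
    by (auto simp: is_dominating_def dominated_below_except_def)
next
  case (Suc k)
  show ?case
  proof (cases "is_dominating {0..<n} path_adj D")
    case True
    then show ?thesis by (rule dom_wins_within_if_dominating)
  next
    case False
    show ?thesis
    proof (rule path_dominator_move[OF Suc.prems False])
      fix w
      assume w: "w \<in> {0..<n} - dominated_by {0..<n} path_adj D"
        and response: "\<And>u. u \<in> closed_nbhd {0..<n} path_adj w \<Longrightarrow>
          \<exists>m H. finite H \<and> dominated_below_except n m H (insert u D) \<and> n - m + 2 * card H \<le> 2 * k"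
      show ?thesis
      proof (rule dom_wins_within_SucI[OF w])
        fix u
        assume u: "u \<in> closed_nbhd {0..<n} path_adj w"
        then have "insert u D \<subseteq> {0..<n}"
          using closed_nbhd_subset[of w "{0..<n}" path_adj] w Suc.prems(1) by blast
        moreover obtain m' H' where "finite H'" "dominated_below_except n m' H' (insert u D)"
          and "n - m' + 2 * card H' \<le> 2 * k"
          using response[OF u] by blast
        ultimately show "dom_wins_within {0..<n} path_adj k (insert u D)"
          by (rule Suc.IH)
      qed
    qed
  qed
qed

lemma nat_ceiling_half: "nat \<lceil>real n / 2\<rceil> = (n + 1) div 2"
proof -
  have "\<lceil>real n / 2\<rceil> = int ((n + 1) div 2)"
    by (rule ceiling_unique) linarith+
  then show ?thesis by simp
qed

theorem corollary5p3:
  fixes n :: nat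
  assumes "n \<ge> 1"
  shows "indicated_domination_number {0..<n} path_adj = nat \<lceil>real n / 2\<rceil>"
proof -
  let ?V = "{0..<n}"
  have "dom_wins_within ?V path_adj ((n + 1) div 2) {}"
    by (rule dom_wins_within_path[where m = 0 and H = "{}"])
      (auto simp: dominated_below_except_def)
  moreover have "\<not> dom_wins_within ?V path_adj k {}" if "k < (n + 1) div 2" for k
    by (rule not_dom_wins_within_if_isolating[of "{i. i < n \<and> even i}"])
      (use that card_even_less path_even_vertices_isolating in \<open>auto simp: dominated_by_def\<close>)
  ultimately have "indicated_domination_number ?V path_adj = (n + 1) div 2"
    unfolding indicated_domination_number_def by (intro Least_equality) (auto simp: not_less[symmetric])
  then show ?thesis
    by (simp add: nat_ceiling_half)
qed

end
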